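(* Let $\|\cdot\|$ be a norm on $\mathbb{R}^d$ with $\|x\|\le\mu\|x\|_2$ for all $x$, and let $T:\mathbb{R}^d\to\mathbb{R}^d$ be a $\gamma$-contraction ($\gamma\in(0,1)$) with unique fixed point $x^*$. Let $\tilde T(x,\xi)$, $\xi\sim\mathcal{D}_x$, be a stochastic oracle with $\mathbb{E}(\tilde T(x,\xi))=Tx$ and $\sup_x\mathbb{E}(\|\tilde T(x,\xi)-Tx\|_2^2)\le\sigma^2$. Let $\varepsilon>0$ and $N=\left\lceil\frac{\|x^0-x^*\|+2\mu\sigma}{\varepsilon(1-\gamma)}\right\rceil$. Consider the stochastic Halpern method: for $n=1,\dots,N$, draw $k_n$ independent samples $\xi_{n,1},\dots,\xi_{n,k_n}\sim\mathcal{D}_{x^{n-1}}$ and set $x^n=(1-\beta_n)x^0+\beta_n\frac{1}{k_n}\sum_{j=1}^{k_n}\tilde T(x^{n-1},\xi_{n,j})$, with $\beta_n=\frac{n}{n+1}$ and $k_n=\lceil n^2\gamma^{N-n}\rceil$. Then the returned $x^N$ satisfies $\mathbb{E}(\|x^N-x^*\|)\le\varepsilon$, and the method uses at most $O\!\left(\frac{\|x^0-x^*\|^2+\mu^2\sigma^2}{\varepsilon^2(1-\gamma)^3}\right)$ queries to $\tilde T$.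
   Context: $\|\cdot\|_2$ is the Euclidean norm; the number of queries is $\sum_{n=1}^N k_n$. *)

theory Defs
  imports "HOL-Probability.Probability"
begin

definition is_norm :: "('a::real_vector \<Rightarrow> real) \<Rightarrow> bool" where
  "is_norm f \<longleftrightarrow> (\<forall>x. 0 \<le> f x) \<and> (\<forall>x. f x = 0 \<longleftrightarrow> x = 0) \<and>
     (\<forall>c x. f (c *\<^sub>R x) = \<bar>c\<bar> * f x) \<and> (\<forall>x y. f (x + y) \<le> f x + f y)"

text \<open>Law (distribution) of the iterate x^n of the stochastic Halpern method with
  anchor x0, weights beta n and batch sizes k n: at step n, k n fresh independent samples
  are drawn from D (x^(n-1)) and x^n is formed from their average.\<close>
primrec halpern_law ::
  "('v::euclidean_space \<Rightarrow> 'b measure) \<Rightarrow> ('v \<Rightarrow> 'b \<Rightarrow> 'v) \<Rightarrow> 'v \<Rightarrow>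
   (nat \<Rightarrow> real) \<Rightarrow> (nat \<Rightarrow> nat) \<Rightarrow> nat \<Rightarrow> 'v measure" where
  "halpern_law D Tt x0 beta k 0 = return borel x0"
| "halpern_law D Tt x0 beta k (Suc n) =
     halpern_law D Tt x0 beta k n \<bind>
       (\<lambda>y. distr (PiM {..<k (Suc n)} (\<lambda>_. D y)) borel
              (\<lambda>\<omega>. (1 - beta (Suc n)) *\<^sub>R x0 +
                   beta (Suc n) *\<^sub>R ((1 / real (k (Suc n))) *\<^sub>R
                      (\<Sum>j<k (Suc n). Tt y (\<omega> j)))))"

text \<open>Number of iterations N, with a = \<parallel>x0 - x*\<parallel> and s = \<mu>\<sigma>.\<close>
definition halpern_N :: "real \<Rightarrow> real \<Rightarrow> real \<Rightarrow> real \<Rightarrow> nat" where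
  "halpern_N a s \<epsilon> \<gamma> = nat \<lceil>(a + 2 * s) / (\<epsilon> * (1 - \<gamma>))\<rceil>"

definition halpern_batch :: "nat \<Rightarrow> real \<Rightarrow> nat \<Rightarrow> nat" where
  "halpern_batch N \<gamma> n = nat \<lceil>real n ^ 2 * \<gamma> ^ (N - n)\<rceil>"

definition halpern_queries :: "nat \<Rightarrow> real \<Rightarrow> nat" where
  "halpern_queries N \<gamma> = (\<Sum>n = 1..N. halpern_batch N \<gamma> n)"

end

theory Submission
  imports Defs
begin

text \<open>Let e_n be the expected error of x^n in the norm nrm. As T x* = x*, one step splits
  x^n - x* into (1 - beta_n) (x^0 - x*) + beta_n (T x^(n-1) - T x*) + beta_n (sample mean - T x^(n-1)).
  Variances of independent samples add, so by Jensen the mean of k_n samples is off by at most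
  sigma / sqrt k_n in expected Euclidean norm, hence by mu sigma / sqrt k_n in nrm. This gives
  e_n <= (1 - beta_n) e_0 + beta_n gamma e_(n-1) + beta_n mu sigma / sqrt k_n. For beta_n = n/(n+1)
  and k_n >= n^2 gamma^(N-n) this recurrence is dominated by
  C_n = (e_0 / (1 - gamma) + mu sigma / ((1 - sqrt gamma) sqrt gamma^(N-n))) / (n + 1),
  and C_N <= (e_0 + 2 mu sigma) / ((1 - gamma) (N + 1)) <= epsilon by the choice of N.
  The number of queries is sum k_n <= N + N^2 / (1 - gamma), which is of the claimed order.\<close>

section \<open>Norms dominated by the Euclidean norm\<close>

lemma is_norm_nonneg: "is_norm f \<Longrightarrow> 0 \<le> f x"
  by (simp add: is_norm_def)

lemma is_norm_eq_0_iff: "is_norm f \<Longrightarrow> f x = 0 \<longleftrightarrow> x = 0"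
  by (simp add: is_norm_def)

lemma is_norm_scaleR: "is_norm f \<Longrightarrow> f (c *\<^sub>R x) = \<bar>c\<bar> * f x"
  by (simp add: is_norm_def)

lemma is_norm_triangle: "is_norm f \<Longrightarrow> f (x + y) \<le> f x + f y"
  by (simp add: is_norm_def)

lemma is_norm_minus_commute: "is_norm f \<Longrightarrow> f (x - y) = f (y - x)"
  using is_norm_scaleR[of f "-1" "y - x"] by simp

lemma is_norm_diff_le: "is_norm f \<Longrightarrow> \<bar>f x - f y\<bar> \<le> f (x - y)"
  using is_norm_triangle[of f "x - y" y] is_norm_triangle[of f "y - x" x]
    is_norm_minus_commute[of f x y] by auto

lemma is_norm_dominated_factor_nonneg:
  fixes f :: "'a::euclidean_space \<Rightarrow> real"
  assumes "is_norm f" and "\<And>x. f x \<le> \<mu> * norm x"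
  shows "0 \<le> \<mu>"
proof -
  obtain b :: 'a where "b \<in> Basis" using nonempty_Basis by blast
  then have "b \<noteq> 0" "norm b = 1" by auto
  then have "0 < f b"
    using assms(1) is_norm_nonneg[of f b] is_norm_eq_0_iff[of f b] by linarith
  with assms(2)[of b] \<open>norm b = 1\<close> show ?thesis by simp
qed

lemma is_norm_borel_measurable:
  fixes f :: "'a::euclidean_space \<Rightarrow> real"
  assumes "is_norm f" and "\<And>x. f x \<le> \<mu> * norm x"
  shows "f \<in> borel_measurable borel"
proof (rule borel_measurable_continuous_onI, rule lipschitz_on_continuous_on)
  show "\<mu>-lipschitz_on UNIV f"
  proof (rule lipschitz_onI)
    fix x y :: 'a
    have "\<bar>f x - f y\<bar> \<le> \<mu> * norm (x - y)"
      using is_norm_diff_le[OF assms(1)] assms(2) order_trans by blast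
    then show "dist (f x) (f y) \<le> \<mu> * dist x y"
      by (simp add: dist_real_def dist_norm)
  qed (rule is_norm_dominated_factor_nonneg[OF assms])
qed

section \<open>Sample means of independent vectors\<close>

lemma power2_norm_eq_sum_Basis:
  "(norm (z::'a::euclidean_space))\<^sup>2 = (\<Sum>b\<in>Basis. (z \<bullet> b)\<^sup>2)"
  unfolding power2_norm_eq_inner by (subst euclidean_inner) (simp add: power2_eq_square)

lemma has_bochner_integral_square_sum_iid:
  fixes f :: "'a \<Rightarrow> real" and I :: "'i set"
  assumes "prob_space M" and "finite I"
    and "integrable M f" and "(\<integral>x. f x \<partial>M) = 0" and "integrable M (\<lambda>x. (f x)\<^sup>2)"
  shows "has_bochner_integral (PiM I (\<lambda>_. M)) (\<lambda>\<omega>. (\<Sum>j\<in>I. f (\<omega> j))\<^sup>2)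
           (real (card I) * (\<integral>x. (f x)\<^sup>2 \<partial>M))"
proof -
  interpret product_prob_space "\<lambda>_. M" I
    using assms(1) by (simp add: product_prob_space_def product_prob_space_axioms_def
        product_sigma_finite_def prob_space_imp_sigma_finite)
  define V where "V = (\<integral>x. (f x)\<^sup>2 \<partial>M)"
  \<comment> \<open>f (\<omega> i) * f (\<omega> j) written as a product over all coordinates, to integrate it factorwise\<close>
  define h :: "'i \<Rightarrow> 'i \<Rightarrow> 'i \<Rightarrow> 'a \<Rightarrow> real"
    where "h i j l = (\<lambda>x. (if l = i then f x else 1) * (if l = j then f x else 1))" for i j l
  have h_integrable: "integrable M (h i j l)" for i j l
    using assms(3,5) by (cases "l = i"; cases "l = j") (simp_all add: h_def power2_eq_square)
  have h_integral: "(\<integral>x. h i j l x \<partial>M) =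
      (if l = i \<and> l = j then V else if l = i \<or> l = j then 0 else 1)" for i j l
    using assms(4) M.prob_space by (simp add: h_def V_def power2_eq_square)
  have cross: "has_bochner_integral (PiM I (\<lambda>_. M)) (\<lambda>\<omega>. f (\<omega> i) * f (\<omega> j))
      (if i = j then V else 0)" if "i \<in> I" "j \<in> I" for i j
  proof -
    have "(\<lambda>\<omega>. \<Prod>l\<in>I. h i j l (\<omega> l)) = (\<lambda>\<omega>. f (\<omega> i) * f (\<omega> j))"
      using that assms(2) by (simp add: h_def prod.distrib)
    moreover have "(\<Prod>l\<in>I. \<integral>x. h i j l x \<partial>M) = (if i = j then V else 0)"
      using that assms(2) by (cases "i = j") (auto simp: h_integral cong: if_cong)
    ultimately show ?thesis
      using product_integrable_prod[of I "h i j"] product_integral_prod[of I "h i j"]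
        assms(2) h_integrable
      by (simp add: has_bochner_integral_iff)
  qed
  have "has_bochner_integral (PiM I (\<lambda>_. M)) (\<lambda>\<omega>. \<Sum>i\<in>I. \<Sum>j\<in>I. f (\<omega> i) * f (\<omega> j))
      (\<Sum>i\<in>I. \<Sum>j\<in>I. if i = j then V else 0)"
    using cross by (intro has_bochner_integral_sum) auto
  then show ?thesis
    using assms(2) by (simp add: V_def power2_eq_square sum_product)
qed

lemma has_bochner_integral_norm_square_sum_iid:
  fixes X :: "'a \<Rightarrow> 'v::euclidean_space" and I :: "'i set"
  assumes "prob_space M" and "finite I"
    and "integrable M X" and "(\<integral>x. X x \<partial>M) = m" and "integrable M (\<lambda>x. (norm (X x - m))\<^sup>2)"
  shows "has_bochner_integral (PiM I (\<lambda>_. M)) (\<lambda>\<omega>. (norm (\<Sum>j\<in>I. X (\<omega> j) - m))\<^sup>2)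
           (real (card I) * (\<integral>x. (norm (X x - m))\<^sup>2 \<partial>M))"
proof -
  interpret M: prob_space M by fact
  define f where "f b = (\<lambda>x. (X x - m) \<bullet> b)" for b
  have X_m_integrable: "integrable M (\<lambda>x. X x - m)"
    using assms(3) by simp
  have "(\<integral>x. X x - m \<partial>M) = 0"
    using assms(3,4) by (simp add: M.prob_space)
  then have f_mean: "(\<integral>x. f b x \<partial>M) = 0" for b
    using X_m_integrable by (simp add: f_def)
  have f_square_integrable: "integrable M (\<lambda>x. (f b x)\<^sup>2)" if "b \<in> Basis" for b
  proof (rule Bochner_Integration.integrable_bound[OF assms(5)])
    show "(\<lambda>x. (f b x)\<^sup>2) \<in> borel_measurable M"
      using X_m_integrable by (simp add: f_def)
    show "AE x in M. norm ((f b x)\<^sup>2) \<le> norm ((norm (X x - m))\<^sup>2)"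
    proof (rule AE_I2)
      fix x
      have "\<bar>f b x\<bar> \<le> \<bar>norm (X x - m)\<bar>"
        using Basis_le_norm[OF that, of "X x - m"] by (simp add: f_def)
      then show "norm ((f b x)\<^sup>2) \<le> norm ((norm (X x - m))\<^sup>2)"
        by (simp flip: abs_le_square_iff)
    qed
  qed
  have coordinate: "has_bochner_integral (PiM I (\<lambda>_. M)) (\<lambda>\<omega>. (\<Sum>j\<in>I. f b (\<omega> j))\<^sup>2)
      (real (card I) * (\<integral>x. (f b x)\<^sup>2 \<partial>M))" if "b \<in> Basis" for b
  proof (rule has_bochner_integral_square_sum_iid[OF assms(1,2)])
    show "integrable M (f b)" using X_m_integrable by (simp add: f_def)
  qed (use f_mean f_square_integrable[OF that] in auto)
  have "has_bochner_integral (PiM I (\<lambda>_. M)) (\<lambda>\<omega>. \<Sum>b\<in>Basis. (\<Sum>j\<in>I. f b (\<omega> j))\<^sup>2)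
      (\<Sum>b\<in>Basis. real (card I) * (\<integral>x. (f b x)\<^sup>2 \<partial>M))"
    using coordinate by (rule has_bochner_integral_sum)
  also have "(\<Sum>b\<in>Basis. real (card I) * (\<integral>x. (f b x)\<^sup>2 \<partial>M))
      = real (card I) * (\<integral>x. (\<Sum>b\<in>Basis. (f b x)\<^sup>2) \<partial>M)"
    using f_square_integrable by (simp add: integral_sum sum_distrib_left)
  also have "\<dots> = real (card I) * (\<integral>x. (norm (X x - m))\<^sup>2 \<partial>M)"
    by (simp add: power2_norm_eq_sum_Basis f_def)
  finally have "has_bochner_integral (PiM I (\<lambda>_. M)) (\<lambda>\<omega>. \<Sum>b\<in>Basis. (\<Sum>j\<in>I. f b (\<omega> j))\<^sup>2)
      (real (card I) * (\<integral>x. (norm (X x - m))\<^sup>2 \<partial>M))" .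
  moreover have "(norm (\<Sum>j\<in>I. X (\<omega> j) - m))\<^sup>2 = (\<Sum>b\<in>Basis. (\<Sum>j\<in>I. f b (\<omega> j))\<^sup>2)" for \<omega>
    by (simp add: power2_norm_eq_sum_Basis f_def inner_sum_left)
  ultimately show ?thesis by simp
qed

lemma (in prob_space) square_expectation_le:
  fixes X :: "'a \<Rightarrow> real"
  assumes "integrable M X" and "integrable M (\<lambda>x. (X x)\<^sup>2)"
  shows "(expectation X)\<^sup>2 \<le> expectation (\<lambda>x. (X x)\<^sup>2)"
  using variance_eq[OF assms] variance_positive[of X] by simp

lemma nn_integral_norm_sample_mean_le:
  fixes X :: "'a \<Rightarrow> 'v::euclidean_space" and I :: "'i set"
  assumes M: "prob_space M" and I: "finite I" "I \<noteq> {}"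
    and X: "integrable M X" "(\<integral>x. X x \<partial>M) = m"
    and var: "(\<integral>\<^sup>+x. ennreal ((norm (X x - m))\<^sup>2) \<partial>M) \<le> ennreal (\<sigma>\<^sup>2)" and "0 \<le> \<sigma>"
  shows "(\<integral>\<^sup>+\<omega>. norm ((1 / real (card I)) *\<^sub>R (\<Sum>j\<in>I. X (\<omega> j)) - m) \<partial>PiM I (\<lambda>_. M))
           \<le> ennreal (\<sigma> / sqrt (real (card I)))"
proof -
  interpret P: prob_space "PiM I (\<lambda>_. M)"
    using M by (intro prob_space_PiM) auto
  define k where "k = real (card I)"
  have k: "0 < k" using I by (simp add: k_def card_gt_0_iff)
  define Z where "Z \<omega> = (\<Sum>j\<in>I. X (\<omega> j) - m)" for \<omega>
  have [measurable]: "X \<in> borel_measurable M" using X by auto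
  have [measurable]: "Z \<in> borel_measurable (PiM I (\<lambda>_. M))" unfolding Z_def by measurable
  have square_integrable: "integrable M (\<lambda>x. (norm (X x - m))\<^sup>2)"
    using var by (auto simp: integrable_iff_bounded le_less_trans)
  have "ennreal (\<integral>x. (norm (X x - m))\<^sup>2 \<partial>M) \<le> ennreal (\<sigma>\<^sup>2)"
    using square_integrable var by (simp add: nn_integral_eq_integral)
  then have variance_le: "(\<integral>x. (norm (X x - m))\<^sup>2 \<partial>M) \<le> \<sigma>\<^sup>2"
    by simp
  have Z_square: "has_bochner_integral (PiM I (\<lambda>_. M)) (\<lambda>\<omega>. (norm (Z \<omega>))\<^sup>2)
      (k * (\<integral>x. (norm (X x - m))\<^sup>2 \<partial>M))"
    unfolding Z_def k_def by (rule has_bochner_integral_norm_square_sum_iid[OF M I(1) X square_integrable])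
  have Z_integrable: "integrable (PiM I (\<lambda>_. M)) (\<lambda>\<omega>. norm (Z \<omega>))"
    by (rule P.square_integrable_imp_integrable[OF _ integrable.intros[OF Z_square]])
      measurable
  have "(P.expectation (\<lambda>\<omega>. norm (Z \<omega>)))\<^sup>2 \<le> k * (\<integral>x. (norm (X x - m))\<^sup>2 \<partial>M)"
    using P.square_expectation_le[OF Z_integrable integrable.intros[OF Z_square]]
    unfolding has_bochner_integral_integral_eq[OF Z_square] .
  also have "\<dots> \<le> k * \<sigma>\<^sup>2"
    using variance_le k by (intro mult_left_mono) auto
  also have "\<dots> = (sqrt k * \<sigma>)\<^sup>2"
    using k by (simp add: power_mult_distrib)
  finally have Z_mean: "P.expectation (\<lambda>\<omega>. norm (Z \<omega>)) \<le> sqrt k * \<sigma>"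
    by (rule power2_le_imp_le) (use \<open>0 \<le> \<sigma>\<close> k in simp)
  have sample_mean_eq: "(1 / real (card I)) *\<^sub>R (\<Sum>j\<in>I. X (\<omega> j)) - m = (1 / k) *\<^sub>R Z \<omega>" for \<omega>
  proof -
    have "Z \<omega> = (\<Sum>j\<in>I. X (\<omega> j)) - k *\<^sub>R m"
      by (simp add: Z_def k_def sum_subtractf sum_constant_scaleR)
    then show ?thesis
      using k by (simp add: scaleR_diff_right k_def)
  qed
  have "(\<integral>\<^sup>+\<omega>. norm ((1 / real (card I)) *\<^sub>R (\<Sum>j\<in>I. X (\<omega> j)) - m) \<partial>PiM I (\<lambda>_. M))
      = (\<integral>\<^sup>+\<omega>. norm (Z \<omega>) / k \<partial>PiM I (\<lambda>_. M))"
    using k by (simp add: sample_mean_eq)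
  also have "\<dots> = ennreal (P.expectation (\<lambda>\<omega>. norm (Z \<omega>)) / k)"
    using Z_integrable k by (subst nn_integral_eq_integral) auto
  also have "\<dots> \<le> ennreal (sqrt k * \<sigma> / k)"
    using Z_mean k by (intro ennreal_leI divide_right_mono) auto
  also have "sqrt k * \<sigma> / k = sqrt k * \<sigma> / (sqrt k * sqrt k)"
    using k by simp
  also have "\<dots> = \<sigma> / sqrt k"
    using k by (simp only: nonzero_mult_divide_mult_cancel_left real_sqrt_eq_zero_cancel_iff)
  finally show ?thesis by (simp add: k_def)
qed

section \<open>The stochastic Halpern iteration\<close>

lemma measurable_PiM_prob_algebra:
  assumes D: "D \<in> N \<rightarrow>\<^sub>M prob_algebra S" and I: "finite I"
  shows "(\<lambda>y. PiM I (\<lambda>_. D y)) \<in> N \<rightarrow>\<^sub>M prob_algebra (PiM I (\<lambda>_. S))"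
proof (rule measurable_prob_algebra_generated[where \<Omega>="PiE I (\<lambda>_. space S)" and G="prod_algebra I (\<lambda>_. S)"])
  show "sets (PiM I (\<lambda>_. S)) = sigma_sets (PiE I (\<lambda>_. space S)) (prod_algebra I (\<lambda>_. S))"
    by (rule sets_PiM)
  show "Int_stable (prod_algebra I (\<lambda>_. S))"
    by (rule Int_stable_prod_algebra)
  show "prod_algebra I (\<lambda>_. S) \<subseteq> Pow (PiE I (\<lambda>_. space S))"
    by (rule prod_algebra_sets_into_space)
  have D_space: "prob_space (D a)" "sets (D a) = sets S" if "a \<in> space N" for a
    using measurable_space[OF D that] by (simp_all add: space_prob_algebra)
  show "prob_space (PiM I (\<lambda>_. D a))" if "a \<in> space N" for a
    using D_space[OF that] by (intro prob_space_PiM) blast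
  show "sets (PiM I (\<lambda>_. D a)) = sets (PiM I (\<lambda>_. S))" if "a \<in> space N" for a
    using D_space[OF that] by (intro sets_PiM_cong) auto
  fix A assume "A \<in> prod_algebra I (\<lambda>_. S)"
  then obtain X where A: "A = PiE I X" and X: "X \<in> (\<Pi> j\<in>I. sets S)"
    by (auto simp: prod_algebra_eq_finite[OF I])
  have "emeasure (PiM I (\<lambda>_. D a)) A = (\<Prod>i\<in>I. emeasure (D a) (X i))" if "a \<in> space N" for a
  proof -
    interpret product_sigma_finite "\<lambda>_. D a"
      using D_space[OF that] by (simp add: product_sigma_finite_def prob_space_imp_sigma_finite)
    show ?thesis
      unfolding A using X D_space[OF that] by (intro emeasure_PiM[OF I]) auto
  qed
  moreover have "(\<lambda>a. \<Prod>i\<in>I. emeasure (D a) (X i)) \<in> borel_measurable N"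
    using X by (intro borel_measurable_prod_ennreal measurable_compose[OF measurable_prob_algebraD[OF D]
        measurable_emeasure_subprob_algebra]) auto
  ultimately show "(\<lambda>a. emeasure (PiM I (\<lambda>_. D a)) A) \<in> borel_measurable N"
    by (subst measurable_cong) auto
qed

definition halpern_update ::
  "('v::real_vector \<Rightarrow> 'b \<Rightarrow> 'v) \<Rightarrow> 'v \<Rightarrow> real \<Rightarrow> nat \<Rightarrow> 'v \<Rightarrow> (nat \<Rightarrow> 'b) \<Rightarrow> 'v" where
  "halpern_update Tt x0 b kk y \<omega> =
     (1 - b) *\<^sub>R x0 + b *\<^sub>R ((1 / real kk) *\<^sub>R (\<Sum>j<kk. Tt y (\<omega> j)))"

lemma halpern_law_Suc_update:
  "halpern_law D Tt x0 beta k (Suc n) = halpern_law D Tt x0 beta k n \<bind>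
     (\<lambda>y. distr (PiM {..<k (Suc n)} (\<lambda>_. D y)) borel
            (halpern_update Tt x0 (beta (Suc n)) (k (Suc n)) y))"
  by (simp add: halpern_update_def[abs_def])

lemma measurable_halpern_step:
  assumes D: "D \<in> borel \<rightarrow>\<^sub>M prob_algebra S"
    and [measurable]: "(\<lambda>(x, \<xi>). Tt x \<xi>) \<in> borel \<Otimes>\<^sub>M S \<rightarrow>\<^sub>M borel"
  shows "(\<lambda>y. distr (PiM {..<kk} (\<lambda>_. D y)) borel (halpern_update Tt x0 b kk y))
           \<in> borel \<rightarrow>\<^sub>M prob_algebra (borel :: 'v::euclidean_space measure)"
proof (rule measurable_distr_prob_space2[OF measurable_PiM_prob_algebra[OF D finite_lessThan]])
  show "(\<lambda>(y, \<omega>). halpern_update Tt x0 b kk y \<omega>)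
      \<in> borel \<Otimes>\<^sub>M PiM {..<kk} (\<lambda>_. S) \<rightarrow>\<^sub>M borel"
    unfolding halpern_update_def by measurable
qed

lemma halpern_law_prob_algebra:
  assumes "D \<in> borel \<rightarrow>\<^sub>M prob_algebra S"
    and "(\<lambda>(x, \<xi>). Tt x \<xi>) \<in> borel \<Otimes>\<^sub>M S \<rightarrow>\<^sub>M borel"
  shows "halpern_law D Tt x0 beta k n \<in> space (prob_algebra borel)"
proof (induction n)
  case 0
  show ?case
    by (simp add: measurable_space[OF measurable_return_prob_space])
next
  case (Suc n)
  note step = measurable_halpern_step[OF assms]
  show ?case
    unfolding halpern_law_Suc_update space_prob_algebra
    using prob_space_bind'[OF Suc step] sets_bind'[OF Suc step] by simp
qed

locale stochastic_halpern =
  fixes nrm :: "'v::euclidean_space \<Rightarrow> real" and \<mu> \<gamma> \<sigma> :: real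
    and T :: "'v \<Rightarrow> 'v" and xs :: 'v
    and S :: "'b measure" and D :: "'v \<Rightarrow> 'b measure" and Tt :: "'v \<Rightarrow> 'b \<Rightarrow> 'v"
  assumes norm_nrm: "is_norm nrm"
    and nrm_le: "\<And>x. nrm x \<le> \<mu> * norm x"
    and gamma_nonneg: "0 \<le> \<gamma>"
    and contraction: "\<And>x y. nrm (T x - T y) \<le> \<gamma> * nrm (x - y)"
    and fixed_point: "T xs = xs"
    and D_kernel: "D \<in> borel \<rightarrow>\<^sub>M prob_algebra S"
    and Tt_measurable: "(\<lambda>(x, \<xi>). Tt x \<xi>) \<in> borel \<Otimes>\<^sub>M S \<rightarrow>\<^sub>M borel"
    and oracle_integrable: "\<And>x. integrable (D x) (Tt x)"
    and oracle_unbiased: "\<And>x. (\<integral>\<xi>. Tt x \<xi> \<partial>D x) = T x"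
    and sigma_nonneg: "0 \<le> \<sigma>"
    and oracle_variance: "\<And>x. (\<integral>\<^sup>+\<xi>. ennreal ((norm (Tt x \<xi> - T x))\<^sup>2) \<partial>D x) \<le> ennreal (\<sigma>\<^sup>2)"
begin

lemma mu_nonneg: "0 \<le> \<mu>"
  using is_norm_dominated_factor_nonneg[OF norm_nrm nrm_le] .

lemma nrm_nonneg: "0 \<le> nrm x"
  using is_norm_nonneg[OF norm_nrm] .

lemma borel_measurable_nrm [measurable]: "nrm \<in> borel_measurable borel"
  using is_norm_borel_measurable[OF norm_nrm nrm_le] .

lemma D_prob_space: "prob_space (D y)" and sets_D: "sets (D y) = sets S"
  using measurable_space[OF D_kernel, of y] by (simp_all add: space_prob_algebra)

lemma Tt_borel_measurable [measurable]: "Tt y \<in> borel_measurable (D y)"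
  using measurable_Pair2[OF Tt_measurable, of y] by (simp add: measurable_cong_sets[OF sets_D refl])

lemma nrm_halpern_update_le:
  assumes "0 \<le> b" "b \<le> 1"
  shows "nrm (halpern_update Tt x0 b kk y \<omega> - xs) \<le> (1 - b) * nrm (x0 - xs) + b * \<gamma> * nrm (y - xs)
           + b * \<mu> * norm ((1 / real kk) *\<^sub>R (\<Sum>j<kk. Tt y (\<omega> j)) - T y)"
proof -
  define avg where "avg = (1 / real kk) *\<^sub>R (\<Sum>j<kk. Tt y (\<omega> j))"
  have "halpern_update Tt x0 b kk y \<omega> - xs
      = (1 - b) *\<^sub>R (x0 - xs) + b *\<^sub>R (T y - T xs) + b *\<^sub>R (avg - T y)"
    by (simp add: halpern_update_def avg_def fixed_point algebra_simps)
  then have "nrm (halpern_update Tt x0 b kk y \<omega> - xs)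
      \<le> nrm ((1 - b) *\<^sub>R (x0 - xs)) + nrm (b *\<^sub>R (T y - T xs)) + nrm (b *\<^sub>R (avg - T y))"
    using is_norm_triangle[OF norm_nrm] by (metis add_right_mono order_trans)
  also have "\<dots> = (1 - b) * nrm (x0 - xs) + b * nrm (T y - T xs) + b * nrm (avg - T y)"
    using assms by (simp add: is_norm_scaleR[OF norm_nrm])
  also have "\<dots> \<le> (1 - b) * nrm (x0 - xs) + b * (\<gamma> * nrm (y - xs)) + b * (\<mu> * norm (avg - T y))"
    using assms contraction nrm_le by (intro add_mono mult_left_mono order_refl) auto
  finally show ?thesis by (simp add: avg_def mult.assoc)
qed

lemma measurable_halpern_update [measurable]:
  "halpern_update Tt x0 b kk y \<in> PiM {..<kk} (\<lambda>_. D y) \<rightarrow>\<^sub>M borel"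
  unfolding halpern_update_def by measurable

lemma nn_integral_halpern_update_le:
  assumes "0 \<le> b" "b \<le> 1" "0 < kk"
  shows "(\<integral>\<^sup>+\<omega>. nrm (halpern_update Tt x0 b kk y \<omega> - xs) \<partial>PiM {..<kk} (\<lambda>_. D y))
           \<le> ennreal ((1 - b) * nrm (x0 - xs) + b * \<gamma> * nrm (y - xs) + b * \<mu> * \<sigma> / sqrt (real kk))"
proof -
  let ?M = "PiM {..<kk} (\<lambda>_. D y)"
  interpret P: prob_space ?M
    using D_prob_space by (intro prob_space_PiM) auto
  define c where "c = (1 - b) * nrm (x0 - xs) + b * \<gamma> * nrm (y - xs)"
  define err where "err \<omega> = norm ((1 / real kk) *\<^sub>R (\<Sum>j<kk. Tt y (\<omega> j)) - T y)" for \<omega>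
  have [measurable]: "err \<in> borel_measurable ?M"
    unfolding err_def by measurable
  have c: "0 \<le> c" "0 \<le> b * \<mu>" "0 \<le> \<sigma> / sqrt (real kk)"
    using assms gamma_nonneg mu_nonneg sigma_nonneg by (simp_all add: c_def nrm_nonneg)
  have "{..<kk} \<noteq> {}"
    using assms(3) by auto
  have "(\<integral>\<^sup>+\<omega>. nrm (halpern_update Tt x0 b kk y \<omega> - xs) \<partial>?M)
      \<le> (\<integral>\<^sup>+\<omega>. ennreal c + ennreal (b * \<mu>) * ennreal (err \<omega>) \<partial>?M)"
  proof (rule nn_integral_mono)
    fix \<omega>
    have "nrm (halpern_update Tt x0 b kk y \<omega> - xs) \<le> c + b * \<mu> * err \<omega>"
      using nrm_halpern_update_le[OF assms(1,2)] by (simp add: c_def err_def)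
    then show "ennreal (nrm (halpern_update Tt x0 b kk y \<omega> - xs))
        \<le> ennreal c + ennreal (b * \<mu>) * ennreal (err \<omega>)"
      using c by (simp add: err_def del: ennreal_plus flip: ennreal_plus ennreal_mult)
  qed
  also have "\<dots> = ennreal c + ennreal (b * \<mu>) * (\<integral>\<^sup>+\<omega>. err \<omega> \<partial>?M)"
    by (simp add: nn_integral_add nn_integral_cmult P.emeasure_space_1)
  also have "(\<integral>\<^sup>+\<omega>. err \<omega> \<partial>?M) \<le> ennreal (\<sigma> / sqrt (real kk))"
    using nn_integral_norm_sample_mean_le[OF D_prob_space finite_lessThan _ oracle_integrable
        oracle_unbiased oracle_variance sigma_nonneg] \<open>{..<kk} \<noteq> {}\<close>
    by (simp add: err_def)
  also have "ennreal c + ennreal (b * \<mu>) * ennreal (\<sigma> / sqrt (real kk))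
      = ennreal (c + b * \<mu> * (\<sigma> / sqrt (real kk)))"
    by (simp only: ennreal_plus[OF c(1) mult_nonneg_nonneg[OF c(2,3)]] ennreal_mult[OF c(2,3)])
  finally show ?thesis
    by (simp add: c_def mult_left_mono)
qed

lemma nn_integral_halpern_law_Suc_le:
  assumes "0 \<le> beta (Suc n)" "beta (Suc n) \<le> 1" "0 < k (Suc n)"
  shows "(\<integral>\<^sup>+x. nrm (x - xs) \<partial>halpern_law D Tt x0 beta k (Suc n))
    \<le> ennreal ((1 - beta (Suc n)) * nrm (x0 - xs) + beta (Suc n) * \<mu> * \<sigma> / sqrt (real (k (Suc n))))
      + ennreal (beta (Suc n) * \<gamma>) * (\<integral>\<^sup>+x. nrm (x - xs) \<partial>halpern_law D Tt x0 beta k n)"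
proof -
  let ?b = "beta (Suc n)" and ?kk = "k (Suc n)"
  let ?L = "halpern_law D Tt x0 beta k n"
  define c where "c = (1 - ?b) * nrm (x0 - xs) + ?b * \<mu> * \<sigma> / sqrt (real ?kk)"
  have c: "0 \<le> c" "0 \<le> ?b * \<gamma>"
    using assms gamma_nonneg mu_nonneg sigma_nonneg by (simp_all add: c_def nrm_nonneg)
  have "?L \<in> space (prob_algebra borel)"
    by (rule halpern_law_prob_algebra[OF D_kernel Tt_measurable])
  then have sets_L: "sets ?L = sets borel" and L: "prob_space ?L"
    by (simp_all add: space_prob_algebra)
  have step: "(\<lambda>y. distr (PiM {..<?kk} (\<lambda>_. D y)) borel (halpern_update Tt x0 ?b ?kk y))
      \<in> ?L \<rightarrow>\<^sub>M subprob_algebra borel"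
    using measurable_prob_algebraD[OF measurable_halpern_step[OF D_kernel Tt_measurable]]
    by (simp add: measurable_cong_sets[OF sets_L refl])
  have "(\<integral>\<^sup>+x. nrm (x - xs) \<partial>halpern_law D Tt x0 beta k (Suc n))
      = (\<integral>\<^sup>+y. \<integral>\<^sup>+\<omega>. nrm (halpern_update Tt x0 ?b ?kk y \<omega> - xs) \<partial>PiM {..<?kk} (\<lambda>_. D y) \<partial>?L)"
    unfolding halpern_law_Suc_update
    by (simp add: nn_integral_bind[OF _ step] nn_integral_distr)
  also have "\<dots> \<le> (\<integral>\<^sup>+y. ennreal c + ennreal (?b * \<gamma>) * nrm (y - xs) \<partial>?L)"
  proof (rule nn_integral_mono)
    fix y
    have "(\<integral>\<^sup>+\<omega>. nrm (halpern_update Tt x0 ?b ?kk y \<omega> - xs) \<partial>PiM {..<?kk} (\<lambda>_. D y))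
        \<le> ennreal ((1 - ?b) * nrm (x0 - xs) + ?b * \<gamma> * nrm (y - xs) + ?b * \<mu> * \<sigma> / sqrt (real ?kk))"
      by (rule nn_integral_halpern_update_le[OF assms])
    also have "\<dots> = ennreal (c + ?b * \<gamma> * nrm (y - xs))"
      by (simp add: c_def algebra_simps)
    also have "\<dots> = ennreal c + ennreal (?b * \<gamma>) * nrm (y - xs)"
      by (simp only: ennreal_plus[OF c(1) mult_nonneg_nonneg[OF c(2) nrm_nonneg]]
          ennreal_mult[OF c(2) nrm_nonneg])
    finally show "(\<integral>\<^sup>+\<omega>. nrm (halpern_update Tt x0 ?b ?kk y \<omega> - xs) \<partial>PiM {..<?kk} (\<lambda>_. D y))
        \<le> ennreal c + ennreal (?b * \<gamma>) * nrm (y - xs)" .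
  qed
  also have "\<dots> = ennreal c + ennreal (?b * \<gamma>) * (\<integral>\<^sup>+y. nrm (y - xs) \<partial>?L)"
    using prob_space.emeasure_space_1[OF L]
    by (simp add: nn_integral_add nn_integral_cmult measurable_cong_sets[OF sets_L refl])
  finally show ?thesis by (simp add: c_def)
qed

end

section \<open>Solving the error recurrence\<close>

text \<open>(n + 1) C_n = A + B / sqrt gamma^(N-n) with A = a / (1 - gamma) and B = s / (1 - sqrt gamma),
  so that a + gamma A = A and s + sqrt gamma B = B; with the sampling term bound of
  halpern_batch_sample_term_le this makes C_n a supersolution of the recurrence.\<close>
definition halpern_error_bound :: "real \<Rightarrow> real \<Rightarrow> real \<Rightarrow> nat \<Rightarrow> nat \<Rightarrow> real" where
  "halpern_error_bound a s \<gamma> N n =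
     (a / (1 - \<gamma>) + s / ((1 - sqrt \<gamma>) * sqrt \<gamma> ^ (N - n))) / (real n + 1)"

lemma halpern_error_bound_nonneg:
  "0 \<le> a \<Longrightarrow> 0 \<le> s \<Longrightarrow> 0 < \<gamma> \<Longrightarrow> \<gamma> < 1 \<Longrightarrow> 0 \<le> halpern_error_bound a s \<gamma> N n"
  by (simp add: halpern_error_bound_def)

lemma halpern_error_bound_0_ge:
  assumes "0 \<le> a" "0 \<le> s" "0 < \<gamma>" "\<gamma> < 1"
  shows "a \<le> halpern_error_bound a s \<gamma> N 0"
proof -
  have "a \<le> a / (1 - \<gamma>)"
    using assms by (simp add: le_divide_eq mult_left_le)
  moreover have "0 \<le> s / ((1 - sqrt \<gamma>) * sqrt \<gamma> ^ N)"
    using assms by simp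
  ultimately show ?thesis
    by (simp add: halpern_error_bound_def)
qed

lemma halpern_batch_sample_term_le:
  assumes "0 < \<gamma>" "0 \<le> s" "0 < n"
  shows "real n * s / sqrt (real (halpern_batch N \<gamma> n)) \<le> s / sqrt \<gamma> ^ (N - n)"
proof -
  define P where "P = sqrt \<gamma> ^ (N - n)"
  have P: "0 < P"
    using assms by (simp add: P_def)
  have "P\<^sup>2 = (sqrt \<gamma>)\<^sup>2 ^ (N - n)"
    by (simp add: P_def mult.commute flip: power_mult)
  then have "(real n * P)\<^sup>2 = real n ^ 2 * \<gamma> ^ (N - n)"
    using assms by (simp add: power_mult_distrib)
  also have "\<dots> \<le> real (halpern_batch N \<gamma> n)"
    unfolding halpern_batch_def by linarith
  finally have sqrt_batch: "real n * P \<le> sqrt (real (halpern_batch N \<gamma> n))"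
    using assms P by (intro real_le_rsqrt) auto
  have nP: "0 < real n * P"
    using assms P by simp
  have "0 < sqrt (real (halpern_batch N \<gamma> n)) * (real n * P)"
    using mult_pos_pos[OF less_le_trans[OF nP sqrt_batch] nP] .
  then have "real n * s / sqrt (real (halpern_batch N \<gamma> n)) \<le> real n * s / (real n * P)"
    using sqrt_batch assms by (intro divide_left_mono) auto
  also have "\<dots> = s / P"
    using assms by simp
  finally show ?thesis
    by (simp add: P_def)
qed

lemma halpern_error_bound_Suc_ge:
  fixes a s \<gamma> :: real
  assumes \<gamma>: "0 < \<gamma>" "\<gamma> < 1" and "0 \<le> s" "m < N"
  defines "\<beta> \<equiv> real (Suc m) / (real (Suc m) + 1)"
  shows "(1 - \<beta>) * a + \<beta> * s / sqrt (real (halpern_batch N \<gamma> (Suc m)))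
           + \<beta> * \<gamma> * halpern_error_bound a s \<gamma> N m
         \<le> halpern_error_bound a s \<gamma> N (Suc m)"
proof -
  define n where "n = real (Suc m)"
  define q where "q = sqrt \<gamma>"
  define P where "P = q ^ (N - Suc m)"
  define A where "A = a / (1 - \<gamma>)"
  define B where "B = s / (1 - q)"
  have q: "0 < q" "q < 1" "\<gamma> = q * q"
    using \<gamma> by (simp_all add: q_def)
  have n: "0 < n" and P: "0 < P"
    using q by (simp_all add: n_def P_def)
  have A: "a + \<gamma> * A = A" and B: "s + q * B = B"
    using \<gamma> q by (simp_all add: A_def B_def field_simps)
  have "N - m = Suc (N - Suc m)"
    using \<open>m < N\<close> by simp
  then have C_m: "halpern_error_bound a s \<gamma> N m = (A + B / (q * P)) / n"
    by (simp add: halpern_error_bound_def A_def B_def P_def q_def n_def mult.assoc)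
  have C_Suc: "halpern_error_bound a s \<gamma> N (Suc m) = (A + B / P) / (n + 1)"
    by (simp add: halpern_error_bound_def A_def B_def P_def q_def n_def mult.assoc)
  have sample_term: "n * s / sqrt (real (halpern_batch N \<gamma> (Suc m))) \<le> s / P"
    using halpern_batch_sample_term_le[OF \<gamma>(1) \<open>0 \<le> s\<close>, of "Suc m"] by (simp add: n_def P_def q_def)
  have \<beta>: "(n + 1) * \<beta> = n" "(n + 1) * (1 - \<beta>) = 1"
    using n by (simp_all add: \<beta>_def n_def field_simps)
  have "(n + 1) * (\<beta> * \<gamma> * halpern_error_bound a s \<gamma> N m)
      = \<gamma> * (n * halpern_error_bound a s \<gamma> N m)"
    using \<beta>(1) by (simp add: mult_ac)
  also have "\<dots> = \<gamma> * (A + B / (q * P))"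
    using n by (simp add: C_m)
  also have "\<dots> = \<gamma> * A + q * B / P"
    using q P by (simp add: q(3) field_simps)
  finally have anchored_term: "(n + 1) * (\<beta> * \<gamma> * halpern_error_bound a s \<gamma> N m) = \<gamma> * A + q * B / P" .
  have "(n + 1) * ((1 - \<beta>) * a + \<beta> * s / sqrt (real (halpern_batch N \<gamma> (Suc m)))
           + \<beta> * \<gamma> * halpern_error_bound a s \<gamma> N m)
      = a + n * s / sqrt (real (halpern_batch N \<gamma> (Suc m))) + (\<gamma> * A + q * B / P)"
    unfolding distrib_left anchored_term using \<beta> by (simp add: mult.assoc[symmetric])
  also have "\<dots> \<le> (a + \<gamma> * A) + (s + q * B) / P"
    using sample_term by (simp add: add_divide_distrib)
  also have "\<dots> = (n + 1) * halpern_error_bound a s \<gamma> N (Suc m)"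
    using n by (simp add: A B C_Suc)
  finally show ?thesis
    using n by (simp add: mult_le_cancel_left_pos)
qed

lemma halpern_error_bound_final_le:
  assumes "0 \<le> a" "0 \<le> s" "0 < \<epsilon>" "0 < \<gamma>" "\<gamma> < 1"
  defines "N \<equiv> halpern_N a s \<epsilon> \<gamma>"
  shows "halpern_error_bound a s \<gamma> N N \<le> \<epsilon>"
proof -
  define q where "q = sqrt \<gamma>"
  have q: "0 < q" "q < 1"
    using assms by (simp_all add: q_def)
  have "1 - \<gamma> = (1 - q) * (1 + q)"
    using assms by (simp add: q_def algebra_simps)
  then have "s / (1 - q) = s * (1 + q) / (1 - \<gamma>)"
    using q by simp
  also have "\<dots> \<le> 2 * s / (1 - \<gamma>)"
    using q assms mult_left_mono[of "1 + q" 2 s] by (intro divide_right_mono) auto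
  finally have "s / (1 - q) \<le> 2 * s / (1 - \<gamma>)" .
  then have "a / (1 - \<gamma>) + s / (1 - q) \<le> (a + 2 * s) / (1 - \<gamma>)"
    by (simp add: add_divide_distrib)
  also have "\<dots> = \<epsilon> * ((a + 2 * s) / (\<epsilon> * (1 - \<gamma>)))"
    using assms by simp
  also have "\<dots> \<le> \<epsilon> * real N"
    unfolding N_def halpern_N_def using assms by (intro mult_left_mono real_nat_ceiling_ge) auto
  also have "\<dots> \<le> \<epsilon> * (real N + 1)"
    using assms by simp
  finally show ?thesis
    by (simp add: halpern_error_bound_def q_def pos_divide_le_eq mult.commute)
qed

context stochastic_halpern
begin

lemma halpern_law_error_le:
  assumes "0 < \<gamma>" "\<gamma> < 1" "n \<le> N"
  shows "(\<integral>\<^sup>+x. nrm (x - xs)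
            \<partial>halpern_law D Tt x0 (\<lambda>n. real n / (real n + 1)) (halpern_batch N \<gamma>) n)
         \<le> ennreal (halpern_error_bound (nrm (x0 - xs)) (\<mu> * \<sigma>) \<gamma> N n)"
  using assms(3)
proof (induction n)
  case 0
  show ?case
    using halpern_error_bound_0_ge[OF nrm_nonneg mult_nonneg_nonneg[OF mu_nonneg sigma_nonneg] assms(1,2)]
    by (simp add: nn_integral_return ennreal_leI)
next
  case (Suc m)
  let ?law = "halpern_law D Tt x0 (\<lambda>n. real n / (real n + 1)) (halpern_batch N \<gamma>)"
  let ?C = "halpern_error_bound (nrm (x0 - xs)) (\<mu> * \<sigma>) \<gamma> N"
  let ?\<beta> = "real (Suc m) / (real (Suc m) + 1)" and ?kk = "halpern_batch N \<gamma> (Suc m)"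
  define c where "c = (1 - ?\<beta>) * nrm (x0 - xs) + ?\<beta> * \<mu> * \<sigma> / sqrt (real ?kk)"
  have nonneg: "0 \<le> c" "0 \<le> ?\<beta> * \<gamma>" "0 \<le> ?C m"
    using assms mu_nonneg sigma_nonneg
    by (simp_all add: c_def nrm_nonneg halpern_error_bound_nonneg)
  have "0 < ?kk"
    using assms by (simp add: halpern_batch_def)
  then have "(\<integral>\<^sup>+x. nrm (x - xs) \<partial>?law (Suc m))
      \<le> ennreal c + ennreal (?\<beta> * \<gamma>) * (\<integral>\<^sup>+x. nrm (x - xs) \<partial>?law m)"
    unfolding c_def by (intro nn_integral_halpern_law_Suc_le) auto
  also have "\<dots> \<le> ennreal c + ennreal (?\<beta> * \<gamma>) * ennreal (?C m)"
    using Suc by (intro add_left_mono mult_left_mono) auto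
  also have "\<dots> = ennreal (c + ?\<beta> * \<gamma> * ?C m)"
    by (simp only: ennreal_plus[OF nonneg(1) mult_nonneg_nonneg[OF nonneg(2,3)]]
        ennreal_mult[OF nonneg(2,3)])
  also have "\<dots> \<le> ennreal (?C (Suc m))"
    using halpern_error_bound_Suc_ge[OF assms(1,2) mult_nonneg_nonneg[OF mu_nonneg sigma_nonneg]]
      Suc.prems
    by (intro ennreal_leI) (simp add: c_def mult.assoc)
  finally show ?case .
qed

end

section \<open>Oracle complexity\<close>

lemma sum_power_diff_le:
  fixes g :: real
  assumes "0 < g" "g < 1"
  shows "(\<Sum>n = 1..N. g ^ (N - n)) \<le> 1 / (1 - g)"
proof -
  have "(\<Sum>n = 1..N. g ^ (N - n)) = (\<Sum>i<N. g ^ i)"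
    by (rule sum.reindex_bij_witness[of _ "\<lambda>i. N - i" "\<lambda>n. N - n"]) auto
  also have "\<dots> = (1 - g ^ N) / (1 - g)"
    using assms by (simp add: sum_gp_strict)
  also have "\<dots> \<le> 1 / (1 - g)"
    using assms by (simp add: divide_right_mono)
  finally show ?thesis .
qed

lemma halpern_queries_le:
  fixes g :: real
  assumes "0 < g" "g < 1"
  shows "real (halpern_queries N g) \<le> real N + (real N)\<^sup>2 / (1 - g)"
proof -
  have "real (halpern_queries N g) = (\<Sum>n = 1..N. real (nat \<lceil>real n ^ 2 * g ^ (N - n)\<rceil>))"
    by (simp add: halpern_queries_def halpern_batch_def)
  also have "\<dots> \<le> (\<Sum>n = 1..N. (real N)\<^sup>2 * g ^ (N - n) + 1)"
  proof (rule sum_mono)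
    fix n assume "n \<in> {1..N}"
    then have "real n ^ 2 * g ^ (N - n) \<le> (real N)\<^sup>2 * g ^ (N - n)"
      using assms by (intro mult_right_mono power_mono) auto
    moreover have "0 \<le> real n ^ 2 * g ^ (N - n)"
      using assms by simp
    ultimately show "real (nat \<lceil>real n ^ 2 * g ^ (N - n)\<rceil>) \<le> (real N)\<^sup>2 * g ^ (N - n) + 1"
      by linarith
  qed
  also have "\<dots> = (real N)\<^sup>2 * (\<Sum>n = 1..N. g ^ (N - n)) + real N"
    by (simp add: sum.distrib sum_distrib_left)
  also have "\<dots> \<le> (real N)\<^sup>2 / (1 - g) + real N"
    using mult_left_mono[OF sum_power_diff_le[OF assms, of N], of "(real N)\<^sup>2"] by simp
  finally show ?thesis by simp
qed

lemma halpern_queries_le_one: "N \<le> 1 \<Longrightarrow> halpern_queries N g \<le> 1"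
  by (cases N) (auto simp: halpern_queries_def halpern_batch_def)

lemma halpern_queries_bound:
  "\<exists>C. \<forall>a s e g. 0 \<le> a \<longrightarrow> 0 \<le> s \<longrightarrow> 0 < e \<longrightarrow> 0 < g \<longrightarrow> g < 1 \<longrightarrow>
     real (halpern_queries (halpern_N a s e g) g) \<le> C * (1 + (a\<^sup>2 + s\<^sup>2) / (e\<^sup>2 * (1 - g) ^ 3))"
proof (intro exI[of _ 48] allI impI)
  fix a s e g :: real
  assume a: "0 \<le> a" and s: "0 \<le> s" and e: "0 < e" and g: "0 < g" "g < 1"
  define X where "X = (a + 2 * s) / (e * (1 - g))"
  define N where "N = halpern_N a s e g"
  define R where "R = (a\<^sup>2 + s\<^sup>2) / (e\<^sup>2 * (1 - g) ^ 3)"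
  have R: "0 \<le> R"
    using g by (simp add: R_def)
  have "N = nat \<lceil>X\<rceil>"
    by (simp add: N_def halpern_N_def X_def)
  show "real (halpern_queries N g) \<le> 48 * (1 + R)"
  proof (cases "N \<le> 1") \<comment> \<open>for N = 1, N + N^2 / (1 - g) is not bounded in terms of R\<close>
    case True
    then show ?thesis
      using halpern_queries_le_one[of N g] R by simp
  next
    case False
    with \<open>N = nat \<lceil>X\<rceil>\<close> have X: "1 < X" "real N \<le> 2 * X"
      by linarith+
    have "(a + 2 * s)\<^sup>2 \<le> 8 * (a\<^sup>2 + s\<^sup>2)"
      using sum_squares_bound[of a "2 * s"] zero_le_power2[of a]
      by (simp add: power2_sum power_mult_distrib; linarith)
    then have "(a + 2 * s)\<^sup>2 / (e\<^sup>2 * (1 - g) ^ 3) \<le> 8 * R"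
      using e g by (simp add: R_def divide_right_mono)
    moreover have "X\<^sup>2 / (1 - g) = (a + 2 * s)\<^sup>2 / (e\<^sup>2 * (1 - g) ^ 3)"
      unfolding X_def using e g by (simp add: power2_eq_square power3_eq_cube)
    ultimately have "X\<^sup>2 / (1 - g) \<le> 8 * R"
      by simp
    moreover have "real N + (real N)\<^sup>2 / (1 - g) \<le> 6 * (X\<^sup>2 / (1 - g))"
    proof -
      have "(real N)\<^sup>2 \<le> 4 * X\<^sup>2"
        using power_mono[OF X(2), of 2] by (simp add: power_mult_distrib)
      then have "(real N)\<^sup>2 / (1 - g) \<le> 4 * (X\<^sup>2 / (1 - g))"
        using divide_right_mono[of "(real N)\<^sup>2" "4 * X\<^sup>2" "1 - g"] g by simp
      moreover have "X \<le> X\<^sup>2" "X\<^sup>2 \<le> X\<^sup>2 / (1 - g)"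
        using X g by (simp_all add: power2_eq_square le_divide_eq mult_left_le)
      ultimately show ?thesis
        using X(2) by linarith
    qed
    ultimately have "real (halpern_queries N g) \<le> 48 * R"
      using halpern_queries_le[OF g, of N] by linarith
    then show ?thesis
      by (simp add: distrib_left)
  qed
qed

theorem corollary2:
  fixes nrm :: "real ^ 'd \<Rightarrow> real"
    and \<mu> \<gamma> \<sigma> \<epsilon> :: real
    and T :: "real ^ 'd \<Rightarrow> real ^ 'd"
    and xs x0 :: "real ^ 'd"
    and S :: "'b measure"
    and D :: "real ^ 'd \<Rightarrow> 'b measure"
    and Tt :: "real ^ 'd \<Rightarrow> 'b \<Rightarrow> real ^ 'd"
  assumes norm_nrm: "is_norm nrm"
    and nrm_le: "\<forall>x. nrm x \<le> \<mu> * norm x"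
    and gamma: "0 < \<gamma>" "\<gamma> < 1"
    and contr: "\<forall>x y. nrm (T x - T y) \<le> \<gamma> * nrm (x - y)"
    and fixpt: "T xs = xs" "\<forall>y. T y = y \<longrightarrow> y = xs"
    and D_kernel: "D \<in> borel \<rightarrow>\<^sub>M prob_algebra S"
    and Tt_meas: "(\<lambda>(x, \<xi>). Tt x \<xi>) \<in> borel \<Otimes>\<^sub>M S \<rightarrow>\<^sub>M borel"
    and unbiased: "\<forall>x. integrable (D x) (Tt x) \<and> (\<integral>\<xi>. Tt x \<xi> \<partial>D x) = T x"
    and sigma: "0 \<le> \<sigma>"
    and variance: "\<forall>x. (\<integral>\<^sup>+\<xi>. ennreal ((norm (Tt x \<xi> - T x))\<^sup>2) \<partial>D x) \<le> ennreal (\<sigma>\<^sup>2)"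
    and eps: "0 < \<epsilon>"
  shows "(let N = halpern_N (nrm (x0 - xs)) (\<mu> * \<sigma>) \<epsilon> \<gamma> in
            (\<integral>\<^sup>+x. ennreal (nrm (x - xs))
               \<partial>halpern_law D Tt x0 (\<lambda>n. real n / (real n + 1)) (halpern_batch N \<gamma>) N)
            \<le> ennreal \<epsilon>)
       \<and> (\<exists>C. \<forall>a s e g. 0 \<le> a \<longrightarrow> 0 \<le> s \<longrightarrow> 0 < e \<longrightarrow> 0 < g \<longrightarrow> g < 1 \<longrightarrow>
            real (halpern_queries (halpern_N a s e g) g)
              \<le> C * (1 + (a\<^sup>2 + s\<^sup>2) / (e\<^sup>2 * (1 - g) ^ 3)))"
proof -
  interpret stochastic_halpern nrm \<mu> \<gamma> \<sigma> T xs S D Tt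
    by unfold_locales (simp_all add: norm_nrm nrm_le contr fixpt(1) D_kernel Tt_meas unbiased
        sigma variance less_imp_le[OF gamma(1)])
  define N where "N = halpern_N (nrm (x0 - xs)) (\<mu> * \<sigma>) \<epsilon> \<gamma>"
  have "(\<integral>\<^sup>+x. nrm (x - xs) \<partial>halpern_law D Tt x0 (\<lambda>n. real n / (real n + 1)) (halpern_batch N \<gamma>) N)
      \<le> ennreal (halpern_error_bound (nrm (x0 - xs)) (\<mu> * \<sigma>) \<gamma> N N)"
    using halpern_law_error_le[OF gamma order_refl] .
  also have "\<dots> \<le> ennreal \<epsilon>"
    unfolding N_def using halpern_error_bound_final_le[OF nrm_nonneg
        mult_nonneg_nonneg[OF mu_nonneg sigma] eps gamma]
    by (rule ennreal_leI)
  finally show ?thesis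
    using halpern_queries_bound unfolding N_def Let_def by blast
qed

end
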